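(* Let $c\in[0,1]$ with $c\neq\frac12$, and define $f_c:[0,1]\to[0,1]$ by $$f_c(x)=\begin{cases} x, & x\in[0,\frac23),\\ (1-2c)x^2+2cx, & x\in[\frac23,1].\end{cases}$$ Let $f_c^n$ denote the $n$-fold composition of $f_c$ with itself and $x^{(n)}=f_c^n(x^{(0)})$. Then: 1. The set of fixed points of $f_c$ is $[0,\frac23)\cup\{1\}$. 2. If $0\le c<\frac12$, then for every $x^{(0)}\in[\frac23,1)$ there exist $n\in\mathbb N$ and $p\in[\frac49(1+c),\frac23)$ such that $f_c^n(x^{(0)})=p$ and $f_c^{n+1}(x^{(0)})=f_c(p)=p$. 3. If $\frac12<c\le1$, then $\lim_{n\to\infty}x^{(n)}=1$ for every $x^{(0)}\in[\frac23,1]$.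
   Context: This map is the reduction to $[0,1]$ of the quadratic stochastic operator $x'=x^2+2p(x)xy$, $y'=2(1-p(x))xy+y^2$ (with $y=1-x$), where $p(x)=a$ for $x\le\frac13$, $b$ for $\frac13<x<\frac23$, $c$ for $x\ge\frac23$, in the case $a=b=\frac12$. *)

theory Defs
  imports "HOL-Analysis.Analysis"
begin

definition fc :: "real \<Rightarrow> real \<Rightarrow> real" where
  "fc c x = (if x < 2/3 then x else (1 - 2*c) * x^2 + 2*c*x)"

end

theory Submission
  imports Defs
begin

text \<open>On \<open>[2/3, 1]\<close> the map is \<open>x + (2c - 1) x (1 - x)\<close>. For \<open>c < 1/2\<close> an orbit starting at
  \<open>x0 < 1\<close> moves down by at least \<open>(1 - 2c) 2/3 (1 - x0)\<close> per step until it falls into \<open>[0, 2/3)\<close>,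
  where every point is fixed; the point where it lands is the image of a point of \<open>[2/3, 1)\<close> and hence
  at least \<open>4/9 (1 + c)\<close>. For \<open>c > 1/2\<close> the distance to \<open>1\<close> gets multiplied by
  \<open>1 - (2c - 1) x \<le> 1 - (2c - 1) 2/3 < 1\<close>, so the orbit converges geometrically.\<close>

lemma fc_below: "x < 2/3 \<Longrightarrow> fc c x = x"
  by (simp add: fc_def)

lemma fc_above: "2/3 \<le> x \<Longrightarrow> fc c x = x + (2*c - 1) * (x * (1 - x))"
  by (simp add: fc_def algebra_simps power2_eq_square)

lemma fc_fixed_points:
  assumes "c \<noteq> 1/2"
  shows "{x \<in> {0..1}. fc c x = x} = {0..<2/3} \<union> {1}"
proof (intro set_eqI iffI)
  fix x assume "x \<in> {x \<in> {0..1}. fc c x = x}"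
  then have x: "0 \<le> x" "x \<le> 1" "fc c x = x" by auto
  show "x \<in> {0..<2/3} \<union> {1}"
  proof (cases "x < 2/3")
    case False
    then have "(2*c - 1) * (x * (1 - x)) = 0" using x fc_above[of x c] by simp
    then have "x * (1 - x) = 0" using assms by simp
    then show ?thesis using False by simp
  qed (use x in auto)
qed (auto simp: fc_def)

lemma iterates_drop_below:
  fixes f :: "real \<Rightarrow> real"
  assumes "0 < d" and decrease: "\<And>x. t \<le> x \<Longrightarrow> x \<le> b \<Longrightarrow> f x \<le> x - d" and "x0 \<le> b"
  shows "\<exists>n. (f ^^ n) x0 < t"
proof (rule ccontr)
  assume "\<nexists>n. (f ^^ n) x0 < t"
  then have above: "t \<le> (f ^^ n) x0" for n by (simp add: not_less)
  have linear: "(f ^^ n) x0 \<le> x0 - real n * d" for n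
  proof (induction n)
    case (Suc n)
    have "0 \<le> real n * d" using \<open>0 < d\<close> by simp
    then have "(f ^^ n) x0 \<le> b" using Suc \<open>x0 \<le> b\<close> by linarith
    then have "(f ^^ Suc n) x0 \<le> (f ^^ n) x0 - d" using decrease above by simp
    with Suc show ?case by (simp add: algebra_simps)
  qed simp
  obtain n :: nat where "(x0 - t) / d < real n" using reals_Archimedean2 by blast
  then have "x0 - real n * d < t" using \<open>0 < d\<close> by (simp add: field_simps)
  with linear[of n] above[of n] show False by linarith
qed

lemma iterates_tendsto_of_contraction_towards:
  fixes f :: "'a::metric_space \<Rightarrow> 'a"
  assumes "0 \<le> r" "r < 1" and "x0 \<in> S"
    and invariant: "\<And>x. x \<in> S \<Longrightarrow> f x \<in> S"
    and contract: "\<And>x. x \<in> S \<Longrightarrow> dist (f x) a \<le> r * dist x a"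
  shows "(\<lambda>n. (f ^^ n) x0) \<longlonglongrightarrow> a"
proof -
  have iterate_in: "(f ^^ n) x0 \<in> S" for n
    by (induction n) (simp_all add: \<open>x0 \<in> S\<close> invariant)
  have bound: "dist ((f ^^ n) x0) a \<le> r ^ n * dist x0 a" for n
  proof (induction n)
    case (Suc n)
    have "dist ((f ^^ Suc n) x0) a \<le> r * dist ((f ^^ n) x0) a"
      using contract[OF iterate_in] by simp
    also have "\<dots> \<le> r * (r ^ n * dist x0 a)" using Suc \<open>0 \<le> r\<close> by (rule mult_left_mono)
    finally show ?case by (simp add: mult.assoc)
  qed simp
  have geometric: "(\<lambda>n. r ^ n * dist x0 a) \<longlonglongrightarrow> 0"
    using LIMSEQ_power_zero[of r] assms by (auto intro: tendsto_mult_left_zero)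
  have "(\<lambda>n. dist ((f ^^ n) x0) a) \<longlonglongrightarrow> 0"
    using bound by (intro tendsto_sandwich[OF _ _ tendsto_const geometric]) simp_all
  then show ?thesis by (rule tendsto_dist_iff[THEN iffD2])
qed

lemma fc_above_decrease:
  assumes "c \<le> 1/2" "2/3 \<le> x" "x \<le> b" "b \<le> 1"
  shows "fc c x \<le> x - (1 - 2*c) * (2/3 * (1 - b))"
proof -
  have "2/3 * (1 - b) \<le> x * (1 - x)" using assms by (intro mult_mono) auto
  then have "(1 - 2*c) * (2/3 * (1 - b)) \<le> (1 - 2*c) * (x * (1 - x))"
    using assms by (intro mult_left_mono) auto
  moreover have "fc c x = x - (1 - 2*c) * (x * (1 - x))"
    using fc_above[OF \<open>2/3 \<le> x\<close>] by (simp add: algebra_simps)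
  ultimately show ?thesis by linarith
qed

lemma fc_above_lower_bound:
  assumes "0 \<le> c" "c \<le> 1/2" "2/3 \<le> x"
  shows "4/9 * (1 + c) \<le> fc c x"
proof -
  have "(2/3)^2 \<le> x^2" using assms by (intro power_mono) auto
  then have "(1 - 2*c) * (4/9) \<le> (1 - 2*c) * x^2"
    using assms by (intro mult_left_mono) (auto simp: power_divide)
  moreover have "2*c * (2/3) \<le> 2*c * x" using assms by (intro mult_left_mono) auto
  moreover have "fc c x = (1 - 2*c) * x^2 + 2*c*x" using assms by (simp add: fc_def)
  moreover have "4/9 * (1 + c) = (1 - 2*c) * (4/9) + 2*c * (2/3)" by (simp add: field_simps)
  ultimately show ?thesis by linarith
qed

lemma fc_iterate_enters_fixed_interval:
  assumes "0 \<le> c" "c < 1/2" "2/3 \<le> x0" "x0 < 1"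
  shows "\<exists>n. (fc c ^^ n) x0 \<in> {4/9 * (1 + c)..<2/3}"
proof -
  have "\<exists>n. (fc c ^^ n) x0 < 2/3"
    using assms fc_above_decrease[of c _ x0]
    by (intro iterates_drop_below[where b = x0 and d = "(1 - 2*c) * (2/3 * (1 - x0))"]) auto
  then obtain n where below: "(fc c ^^ n) x0 < 2/3" and first: "\<forall>k<n. 2/3 \<le> (fc c ^^ k) x0"
    using exists_least_iff[of "\<lambda>n. (fc c ^^ n) x0 < 2/3"] by (auto simp: not_less)
  obtain m where "n = Suc m" using below \<open>2/3 \<le> x0\<close> by (cases n) auto
  then have "4/9 * (1 + c) \<le> (fc c ^^ n) x0"
    using first fc_above_lower_bound assms by simp
  with below show ?thesis by auto
qed

lemma fc_above_contraction:
  assumes "1/2 < c" "c \<le> 1" "2/3 \<le> x" "x \<le> 1"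
  shows "fc c x \<in> {2/3..1}" "dist (fc c x) 1 \<le> (1 - (2*c - 1) * (2/3)) * dist x 1"
proof -
  have factor: "1 - fc c x = (1 - (2*c - 1) * x) * (1 - x)"
    using fc_above[OF \<open>2/3 \<le> x\<close>] by (simp add: algebra_simps)
  have "(2*c - 1) * x \<le> 1 * 1" using assms by (intro mult_mono) auto
  moreover have "(2*c - 1) * (2/3) \<le> (2*c - 1) * x" using assms by (intro mult_left_mono) auto
  ultimately have "0 \<le> 1 - (2*c - 1) * x" "1 - (2*c - 1) * x \<le> 1 - (2*c - 1) * (2/3)" by simp_all
  then have "0 \<le> 1 - fc c x" "1 - fc c x \<le> (1 - (2*c - 1) * (2/3)) * (1 - x)"
    unfolding factor using assms by (simp_all add: mult_right_mono)
  moreover have "x \<le> fc c x" using fc_above[OF \<open>2/3 \<le> x\<close>] assms by simp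
  ultimately show "fc c x \<in> {2/3..1}" "dist (fc c x) 1 \<le> (1 - (2*c - 1) * (2/3)) * dist x 1"
    using assms by (auto simp: dist_real_def)
qed

theorem theorem2p3:
  fixes c :: real
  assumes "0 \<le> c" and "c \<le> 1" and "c \<noteq> 1/2"
  shows "{x \<in> {0..1}. fc c x = x} = {0..<2/3} \<union> {1}
    \<and> (c < 1/2 \<longrightarrow> (\<forall>x0 \<in> {2/3..<1}. \<exists>(n::nat) p.
            p \<in> {4/9 * (1 + c)..<2/3} \<and> (fc c ^^ n) x0 = p \<and>
            (fc c ^^ (Suc n)) x0 = fc c p \<and> fc c p = p))
    \<and> (1/2 < c \<longrightarrow> (\<forall>x0 \<in> {2/3..1}. (\<lambda>n. (fc c ^^ n) x0) \<longlonglongrightarrow> 1))"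
proof (intro conjI impI ballI)
  show "{x \<in> {0..1}. fc c x = x} = {0..<2/3} \<union> {1}"
    using fc_fixed_points[OF assms(3)] .
next
  fix x0 :: real assume "c < 1/2" "x0 \<in> {2/3..<1}"
  then obtain n where "(fc c ^^ n) x0 \<in> {4/9 * (1 + c)..<2/3}"
    using fc_iterate_enters_fixed_interval assms(1) by auto
  then show "\<exists>n p. p \<in> {4/9 * (1 + c)..<2/3} \<and> (fc c ^^ n) x0 = p \<and>
      (fc c ^^ Suc n) x0 = fc c p \<and> fc c p = p"
    by (intro exI[of _ n]) (simp add: fc_below)
next
  fix x0 :: real assume "1/2 < c" "x0 \<in> {2/3..1}"
  then show "(\<lambda>n. (fc c ^^ n) x0) \<longlonglongrightarrow> 1"
    using fc_above_contraction assms(2)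
    by (intro iterates_tendsto_of_contraction_towards[where S = "{2/3..1}" and r = "1 - (2*c - 1) * (2/3)"])
      auto
qed

end
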